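(* For every sequence $a\in\mathcal{A}$: if $a$ is a member of the Catalan family $\mathcal{C}$ then $\delta a=a$; otherwise $a<\delta a$ in the lexicographic order (on sequences of the same length).
   Context: $\mathcal{A}$ is the set of finite integer sequences $a=(a_0,\dots,a_n)$ (any $n\ge0$) with $0\le a_i\le i$ for all $i$; $\mathcal{A}_n$ denotes those of length $n+1$. The map $\delta:\mathcal{A}\to\mathcal{A}$ is defined by $(\delta a)_i=\#\{j: j<i,\ a_j<a_i\}$ (it preserves length). Lexicographic order on $\mathcal{A}_n$: $a<b$ iff $a_i<b_i$ at the first index where they differ. The Catalan family $\mathcal{C}\subseteq\mathcal{A}$ is defined recursively together with, for each member $a$, a "sibling list" $L(a)$, a finite strictly increasing list of integers: $(0)\in\mathcal{C}$ with $L((0))=(0)$. If $a=(a_0,\dots,a_n)\in\mathcal{C}$ with $L(a)=(s_0,s_1,\dots,s_m)$ and $a_n=s_i$, then the children of $a$ are the sequences $(a_0,\dots,a_n,t)$ for $t\in\{s_0,s_1,\dots,s_i,n+1\}$; all of them belong to $\mathcal{C}$ and each has sibling list $(s_0,\dots,s_i,n+1)$. $\mathcal{C}$ consists exactly of the sequences obtained this way. (Thus e.g. generation 1 members are $(0,0),(0,1)$; generation 2 members are $(0,0,0),(0,0,2),(0,1,0),(0,1,1),(0,1,2)$.) *)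

theory Defs
  imports Main
begin

text \<open>Sequences (a_0,...,a_n) are represented as nonempty lists; a!i is a_i.\<close>

definition inA :: "nat list \<Rightarrow> bool" where
  "inA a \<longleftrightarrow> a \<noteq> [] \<and> (\<forall>i < length a. a ! i \<le> i)"

definition delta :: "nat list \<Rightarrow> nat list" where
  "delta a = map (\<lambda>i. card {j. j < i \<and> a ! j < a ! i}) [0..<length a]"

definition lex_less :: "nat list \<Rightarrow> nat list \<Rightarrow> bool" where
  "lex_less a b \<longleftrightarrow> length a = length b \<and>
     (\<exists>k < length a. (\<forall>j < k. a ! j = b ! j) \<and> a ! k < b ! k)"

text \<open>Catalan family with sibling lists: catalan_sib a L means a is in C with sibling list L.
  For a = (a_0..a_n) we have length a = n+1; a_n = s_i is L ! i.\<close>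
inductive catalan_sib :: "nat list \<Rightarrow> nat list \<Rightarrow> bool" where
  base: "catalan_sib [0] [0]"
| step: "\<lbrakk> catalan_sib a L; i < length L; last a = L ! i;
           t \<in> set (take (Suc i) L) \<or> t = length a \<rbrakk>
         \<Longrightarrow> catalan_sib (a @ [t]) (take (Suc i) L @ [length a])"

definition catalan :: "nat list \<Rightarrow> bool" where
  "catalan a \<longleftrightarrow> (\<exists>L. catalan_sib a L)"

end

theory Submission
  imports Defs
begin

text \<open>Write \<open>c\<^sub>a(t)\<close> for the number of entries of \<open>a\<close> below \<open>t\<close>. Then
  \<open>\<delta>(a @ [x]) = \<delta>a @ [c\<^sub>a(x)]\<close>, and \<open>c\<^sub>a(t) \<ge> t\<close> for \<open>t \<le> |a|\<close> as soon as \<open>a\<^sub>i \<le> i\<close>.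
  Along the generating tree, the sibling list of a member \<open>a @ [x]\<close> of \<open>\<C>\<close> enumerates
  exactly the \<open>t \<le> |a|\<close> with \<open>c\<^sub>a(t) = t\<close>; hence \<open>a @ [x] \<in> \<C>\<close> iff \<open>a \<in> \<C>\<close> and
  \<open>c\<^sub>a(x) = x\<close>. By induction on the length, \<open>\<delta>\<close> fixes \<open>\<C>\<close>, and at the first index where
  a sequence leaves \<open>\<C>\<close>, \<open>\<delta>\<close> agrees with it before that index and is strictly larger there.\<close>

definition count_less :: "nat list \<Rightarrow> nat \<Rightarrow> nat" where
  "count_less xs t = length (filter (\<lambda>y. y < t) xs)"

lemma count_less_Nil [simp]: "count_less [] t = 0"
  by (simp add: count_less_def)

lemma count_less_append:
  "count_less (xs @ ys) t = count_less xs t + count_less ys t"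
  by (simp add: count_less_def)

lemma count_less_snoc [simp]:
  "count_less (xs @ [x]) t = count_less xs t + (if x < t then 1 else 0)"
  by (simp add: count_less_def)

lemma count_less_eq_length: "\<forall>y\<in>set xs. y < t \<Longrightarrow> count_less xs t = length xs"
  by (simp add: count_less_def)

lemma count_less_ge:
  assumes "\<forall>i < length xs. xs ! i \<le> i" and "t \<le> length xs"
  shows "t \<le> count_less xs t"
proof -
  have "y < t" if "y \<in> set (take t xs)" for y
  proof -
    obtain i where "i < t" "i < length xs" "y = xs ! i"
      using \<open>y \<in> set (take t xs)\<close> by (auto simp: in_set_conv_nth)
    with assms(1) show "y < t" by fastforce
  qed
  then have "t = count_less (take t xs) t"
    using assms(2) by (simp add: count_less_eq_length)
  also have "\<dots> \<le> count_less (take t xs) t + count_less (drop t xs) t"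
    by simp
  also have "\<dots> = count_less xs t"
    using count_less_append[of "take t xs" "drop t xs" t] by simp
  finally show ?thesis .
qed

lemma inA_snoc_iff: "inA (xs @ [x]) \<longleftrightarrow> (\<forall>i < length xs. xs ! i \<le> i) \<and> x \<le> length xs"
  by (auto simp: inA_def All_less_Suc nth_append)

lemma inA_butlast:
  assumes "inA (xs @ [x])" and "xs \<noteq> []"
  shows "inA xs"
  using assms(2) inA_snoc_iff[THEN iffD1, OF assms(1)] by (simp add: inA_def)

lemma inA_less_length: "inA xs \<Longrightarrow> y \<in> set xs \<Longrightarrow> y < length xs"
  by (auto simp: inA_def in_set_conv_nth)

lemma delta_snoc: "delta (xs @ [x]) = delta xs @ [count_less xs x]"
proof -
  have "{j. j < length xs \<and> (xs @ [x]) ! j < x} = {j. j < length xs \<and> xs ! j < x}"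
    by (auto simp: nth_append)
  then have "card {j. j < length xs \<and> (xs @ [x]) ! j < x} = count_less xs x"
    by (simp add: count_less_def length_filter_conv_card)
  then show ?thesis
    by (auto simp: delta_def nth_append intro!: arg_cong[where f = card])
qed

lemma lex_less_snoc:
  assumes "lex_less xs ys"
  shows "lex_less (xs @ [x]) (ys @ [y])"
proof -
  obtain k where "length xs = length ys" "k < length xs"
    "\<forall>j < k. xs ! j = ys ! j" "xs ! k < ys ! k"
    using assms by (auto simp: lex_less_def)
  then show ?thesis
    unfolding lex_less_def by (auto simp: nth_append intro!: exI[of _ k])
qed

lemma lex_less_snoc_same_prefix:
  "x < y \<Longrightarrow> lex_less (xs @ [x]) (xs @ [y])"
  unfolding lex_less_def by (auto simp: nth_append intro!: exI[of _ "length xs"])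

lemma mem_set_take_Suc_sorted_iff:
  fixes L :: "nat list"
  assumes "sorted_wrt (<) L" and "i < length L"
  shows "s \<in> set (take (Suc i) L) \<longleftrightarrow> s \<in> set L \<and> s \<le> L ! i"
proof -
  have index_le_iff: "L ! k \<le> L ! i \<longleftrightarrow> k \<le> i" if "k < length L" for k
    using sorted_wrt_nth_less[OF assms(1), of k i] sorted_wrt_nth_less[OF assms(1), of i k]
      assms(2) that
    by (cases k i rule: linorder_cases) auto
  have "s \<in> set (take (Suc i) L) \<longleftrightarrow> (\<exists>k < length L. k \<le> i \<and> L ! k = s)"
    using assms(2) by (auto simp: in_set_conv_nth less_Suc_eq_le) (metis le_less_trans)
  also have "\<dots> \<longleftrightarrow> (\<exists>k < length L. L ! k \<le> L ! i \<and> L ! k = s)"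
    using index_le_iff by blast
  also have "\<dots> \<longleftrightarrow> s \<in> set L \<and> s \<le> L ! i"
    by (auto simp: in_set_conv_nth)
  finally show ?thesis .
qed

definition count_fixpoints :: "nat list \<Rightarrow> nat set" where
  "count_fixpoints xs = {t. t \<le> length xs \<and> count_less xs t = t}"

lemma count_fixpoints_snoc:
  assumes "inA (xs @ [x])"
  shows "count_fixpoints (xs @ [x]) =
    {t \<in> count_fixpoints xs. t \<le> x} \<union> {length (xs @ [x])}"
proof -
  have ge: "t \<le> count_less xs t" if "t \<le> length xs" for t
    using assms that by (intro count_less_ge) (simp_all add: inA_snoc_iff)
  have full: "count_less (xs @ [x]) (length (xs @ [x])) = length (xs @ [x])"
    using assms by (blast intro: count_less_eq_length inA_less_length)
  show ?thesis
  proof (rule set_eqI)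
    fix t
    show "t \<in> count_fixpoints (xs @ [x]) \<longleftrightarrow>
      t \<in> {t \<in> count_fixpoints xs. t \<le> x} \<union> {length (xs @ [x])}"
    proof (cases "t \<le> length xs")
      case True
      then show ?thesis
        using ge[OF True] by (auto simp: count_fixpoints_def)
    next
      case False
      then show ?thesis
        using full by (auto simp: count_fixpoints_def)
    qed
  qed
qed

lemma catalan_sib_invariant:
  assumes "catalan_sib a L"
  shows "inA a \<and> sorted_wrt (<) L \<and> set L = count_fixpoints (butlast a) \<and> last a \<in> set L"
  using assms
proof (induction rule: catalan_sib.induct)
  case base
  then show ?case by (auto simp: inA_def count_fixpoints_def)
next
  case (step a L i t)
  then have a: "inA a" and L: "sorted_wrt (<) L" "set L = count_fixpoints (butlast a)"
    by blast+
  have L_bound: "\<forall>s \<in> set L. s < length a"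
  proof
    fix s
    assume "s \<in> set L"
    then have "s \<le> length (butlast a)"
      using L(2) by (simp add: count_fixpoints_def)
    moreover have "length (butlast a) < length a"
      using a by (cases a rule: rev_cases) (auto simp: inA_def)
    ultimately show "s < length a"
      by (rule le_less_trans)
  qed
  have "t \<in> set L \<or> t = length a"
    using step.hyps(4) by (blast dest: in_set_takeD)
  then have t: "t \<le> length a"
    using L_bound less_imp_le le_refl by blast
  have "a = butlast a @ [last a]"
    using a by (simp add: inA_def)
  then have "count_fixpoints a = {s \<in> set L. s \<le> L ! i} \<union> {length a}"
    using count_fixpoints_snoc[of "butlast a" "last a"] a L(2) step.hyps(3) by simp
  also have "\<dots> = set (take (Suc i) L @ [length a])"
    using mem_set_take_Suc_sorted_iff[OF L(1) step.hyps(2)] by auto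
  finally have "set (take (Suc i) L @ [length a]) = count_fixpoints (butlast (a @ [t]))"
    by simp
  moreover have "inA (a @ [t])"
    unfolding inA_snoc_iff using a t by (simp add: inA_def)
  moreover have "sorted_wrt (<) (take (Suc i) L @ [length a])"
    using L(1) L_bound set_take_subset[of "Suc i" L]
    by (auto simp: sorted_wrt_append sorted_wrt_take)
  ultimately show ?case
    using step.hyps(4) by auto
qed

lemma catalan_singleton: "catalan [0]"
  by (auto simp: catalan_def intro: catalan_sib.base)

lemma catalan_butlast: "catalan (xs @ [x]) \<Longrightarrow> xs \<noteq> [] \<Longrightarrow> catalan xs"
  unfolding catalan_def by (auto elim: catalan_sib.cases)

lemma catalan_snoc_iff:
  assumes "catalan xs" and "x \<le> length xs"
  shows "catalan (xs @ [x]) \<longleftrightarrow> count_less xs x = x"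
proof
  assume "catalan (xs @ [x])"
  then obtain L' where "catalan_sib (xs @ [x]) L'"
    by (auto simp: catalan_def)
  then show "count_less xs x = x"
    using catalan_sib_invariant by (fastforce simp: count_fixpoints_def)
next
  assume x_fixed: "count_less xs x = x"
  obtain L where L: "catalan_sib xs L"
    using assms(1) by (auto simp: catalan_def)
  then have xs: "inA xs" and L_sorted: "sorted_wrt (<) L"
    and L_set: "set L = count_fixpoints (butlast xs)" and "last xs \<in> set L"
    using catalan_sib_invariant by blast+
  then obtain i where i: "i < length L" "last xs = L ! i"
    by (metis in_set_conv_nth)
  have "xs = butlast xs @ [last xs]"
    using xs by (simp add: inA_def)
  then have "count_fixpoints xs = {s \<in> set L. s \<le> L ! i} \<union> {length xs}"
    using count_fixpoints_snoc[of "butlast xs" "last xs"] xs L_set i(2) by simp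
  moreover have "x \<in> count_fixpoints xs"
    using assms(2) x_fixed by (simp add: count_fixpoints_def)
  ultimately have "x \<in> set (take (Suc i) L) \<or> x = length xs"
    using mem_set_take_Suc_sorted_iff[OF L_sorted i(1)] by auto
  then show "catalan (xs @ [x])"
    using catalan_sib.step[OF L i] by (auto simp: catalan_def)
qed

lemma delta_snoc_of_catalan_fixed:
  assumes "catalan xs" and "delta xs = xs" and "inA (xs @ [x])"
  shows "if catalan (xs @ [x]) then delta (xs @ [x]) = xs @ [x]
    else lex_less (xs @ [x]) (delta (xs @ [x]))"
proof -
  from assms(3) have "\<forall>i < length xs. xs ! i \<le> i" and x: "x \<le> length xs"
    by (simp_all add: inA_snoc_iff)
  then have "x \<le> count_less xs x"
    by (rule count_less_ge)
  moreover have "delta (xs @ [x]) = xs @ [count_less xs x]"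
    using assms(2) by (simp add: delta_snoc)
  ultimately show ?thesis
    using catalan_snoc_iff[OF assms(1) x] lex_less_snoc_same_prefix by auto
qed

theorem mainTheorem2:
  fixes a :: "nat list"
  assumes "inA a"
  shows "(catalan a \<longrightarrow> delta a = a) \<and> (\<not> catalan a \<longrightarrow> lex_less a (delta a))"
proof -
  have "a \<noteq> []"
    using assms by (simp add: inA_def)
  then have "if catalan a then delta a = a else lex_less a (delta a)"
    using assms
  proof (induction a rule: rev_nonempty_induct)
    case (single x)
    then have "x = 0" by (simp add: inA_def)
    then show ?case by (simp add: catalan_singleton delta_def)
  next
    case (snoc x xs)
    have xs: "inA xs"
      using inA_butlast snoc.prems snoc.hyps by blast
    show ?case
    proof (cases "catalan xs")
      case True
      then show ?thesis
        using snoc.IH[OF xs] delta_snoc_of_catalan_fixed[OF True _ snoc.prems] by simp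
    next
      case False
      then show ?thesis
        using snoc.IH[OF xs] snoc.hyps catalan_butlast by (auto simp: delta_snoc lex_less_snoc)
    qed
  qed
  then show ?thesis by auto
qed

end
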